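(* Let $k$ be a positive integer. If $H$ is a thickened $4k$-path, then $\mathrm{ecrw}(H)\ge k$.
   Context: A thickened $n$-path is the graph obtained from the path on $n$ vertices by replacing each edge by $n$ internally vertex-disjoint paths of length two; explicitly, vertices $u_1,\dots,u_n$ and $v_{i,j}$ ($i\in[n-1]$, $j\in[n]$), with edges $u_iv_{i,j}$ and $u_{i+1}v_{i,j}$. A tree-cut decomposition of a graph $G$ is a pair $\mathcal{T}=(T,\{X_t\}_{t\in V(T)})$ where $T$ is a tree and the bags $X_t\subseteq V(G)$ are pairwise disjoint (possibly empty) with $\bigcup_{t\in V(T)}X_t=V(G)$. For a node $t$ of $T$, let $T_1,\dots,T_m$ be the connected components of $T-t$ and $Z_i=\bigcup_{s\in V(T_i)}X_s$; $\mathrm{cross}_{\mathcal{T}}(t)$ is the number of edges of $G$ whose two endpoints lie in two distinct sets among $Z_1,\dots,Z_m$ (if $T$ has one node, $\mathrm{cross}_{\mathcal T}(t)=0$). The crossing number of $\mathcal{T}$ is $\max_{t}\mathrm{cross}_{\mathcal{T}}(t)$, and the thickness of $\mathcal{T}$ is $\max_t|X_t|$. The edge-crossing width of $\mathcal T$ is the maximum of its crossing number and its thickness, and $\mathrm{ecrw}(G)$ is the minimum edge-crossing width over all tree-cut decompositions of $G$. *)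

theory Defs
  imports Main
begin

definition simple_graph :: "'a set \<Rightarrow> 'a set set \<Rightarrow> bool" where
  "simple_graph V E \<longleftrightarrow> finite V \<and> (\<forall>e\<in>E. \<exists>x y. x \<in> V \<and> y \<in> V \<and> x \<noteq> y \<and> e = {x, y})"

definition adj_in :: "'a set set \<Rightarrow> 'a set \<Rightarrow> 'a \<Rightarrow> 'a \<Rightarrow> bool" where
  "adj_in E S a b \<longleftrightarrow> a \<in> S \<and> b \<in> S \<and> a \<noteq> b \<and> {a, b} \<in> E"

definition conn_in :: "'a set set \<Rightarrow> 'a set \<Rightarrow> 'a \<Rightarrow> 'a \<Rightarrow> bool" where
  "conn_in E S a b \<longleftrightarrow> a \<in> S \<and> b \<in> S \<and> (adj_in E S)\<^sup>*\<^sup>* a b"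

text \<open>A tree: a finite nonempty connected graph that is acyclic, i.e. every edge is a
  bridge (removing it disconnects its endpoints).\<close>

definition is_tree :: "'a set \<Rightarrow> 'a set set \<Rightarrow> bool" where
  "is_tree N ET \<longleftrightarrow> simple_graph N ET \<and> N \<noteq> {}
     \<and> (\<forall>a\<in>N. \<forall>b\<in>N. conn_in ET N a b)
     \<and> (\<forall>e\<in>ET. \<forall>a b. e = {a, b} \<longrightarrow> \<not> conn_in (ET - {e}) N a b)"

definition tree_cut_decomp ::
  "'a set \<Rightarrow> 'a set set \<Rightarrow> 'b set \<Rightarrow> 'b set set \<Rightarrow> ('b \<Rightarrow> 'a set) \<Rightarrow> bool" where
  "tree_cut_decomp V E N ET X \<longleftrightarrow> is_tree N ET
     \<and> (\<forall>s\<in>N. \<forall>t\<in>N. s \<noteq> t \<longrightarrow> X s \<inter> X t = {})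
     \<and> (\<Union>t\<in>N. X t) = V"

text \<open>cross(t): number of edges of G whose endpoints lie in bags of two nodes
  belonging to distinct components of T - t (i.e. in distinct sets Z_i).\<close>

definition tcd_cross ::
  "'a set set \<Rightarrow> 'b set \<Rightarrow> 'b set set \<Rightarrow> ('b \<Rightarrow> 'a set) \<Rightarrow> 'b \<Rightarrow> nat" where
  "tcd_cross E N ET X t = card {e\<in>E. \<exists>x y s1 s2. e = {x, y} \<and>
       s1 \<in> N - {t} \<and> s2 \<in> N - {t} \<and> x \<in> X s1 \<and> y \<in> X s2 \<and>
       \<not> conn_in ET (N - {t}) s1 s2}"

definition tcd_crossing_number ::
  "'a set set \<Rightarrow> 'b set \<Rightarrow> 'b set set \<Rightarrow> ('b \<Rightarrow> 'a set) \<Rightarrow> nat" where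
  "tcd_crossing_number E N ET X = Max ((\<lambda>t. tcd_cross E N ET X t) ` N)"

definition tcd_thickness :: "'b set \<Rightarrow> ('b \<Rightarrow> 'a set) \<Rightarrow> nat" where
  "tcd_thickness N X = Max ((\<lambda>t. card (X t)) ` N)"

definition tcd_ecr_width ::
  "'a set set \<Rightarrow> 'b set \<Rightarrow> 'b set set \<Rightarrow> ('b \<Rightarrow> 'a set) \<Rightarrow> nat" where
  "tcd_ecr_width E N ET X = max (tcd_crossing_number E N ET X) (tcd_thickness N X)"

text \<open>Tree nodes are
  taken from type nat, which is no restriction since every finite tree is isomorphic
  to one whose nodes are natural numbers.\<close>

definition ecrw :: "'a set \<Rightarrow> 'a set set \<Rightarrow> nat" where
  "ecrw V E = (LEAST w. \<exists>(N :: nat set) ET X.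
       tree_cut_decomp V E N ET X \<and> tcd_ecr_width E N ET X = w)"

datatype tp_vertex = U nat | W nat nat

definition thick_path_V :: "nat \<Rightarrow> tp_vertex set" where
  "thick_path_V n = {U i | i. 1 \<le> i \<and> i \<le> n}
     \<union> {W i j | i j. 1 \<le> i \<and> i \<le> n - 1 \<and> 1 \<le> j \<and> j \<le> n}"

definition thick_path_E :: "nat \<Rightarrow> tp_vertex set set" where
  "thick_path_E n = {{U i, W i j} | i j. 1 \<le> i \<and> i \<le> n - 1 \<and> 1 \<le> j \<and> j \<le> n}
     \<union> {{U (i + 1), W i j} | i j. 1 \<le> i \<and> i \<le> n - 1 \<and> 1 \<le> j \<and> j \<le> n}"

end

theory Submission
  imports Defs
begin

text \<open>Take a tree-cut decomposition of the thickened \<open>n\<close>-path of width \<open>w\<close>. If all path vertices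
  \<open>u\<^sub>i\<close> lie in one bag, that bag has \<open>n\<close> vertices. Otherwise some consecutive \<open>u\<^sub>i\<close>, \<open>u\<^sub>i\<^sub>+\<^sub>1\<close> lie
  in bags of distinct nodes \<open>a\<close>, \<open>b\<close>. Each of the \<open>n\<close> paths \<open>u\<^sub>i v\<^sub>i\<^sub>,\<^sub>j u\<^sub>i\<^sub>+\<^sub>1\<close> must then either put
  \<open>v\<^sub>i\<^sub>,\<^sub>j\<close> into the bag of a node separating \<open>a\<close> from \<open>b\<close>, or contribute an edge crossing at
  such a node. A node \<open>c\<close> strictly between \<open>a\<close> and \<open>b\<close> gives \<open>n \<le> |X c| + 2 cross(c) \<le> 3w\<close>;
  if \<open>a\<close> and \<open>b\<close> are adjacent, the separating role is shared by \<open>a\<close> and \<open>b\<close>, giving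
  \<open>n \<le> |X a| + |X b| + cross(a) + cross(b) \<le> 4w\<close>. Hence \<open>n \<le> 4w\<close>.\<close>

lemma adj_in_commute: "adj_in E S a b \<longleftrightarrow> adj_in E S b a"
  unfolding adj_in_def by (auto simp: insert_commute)

lemma conn_in_sym: "conn_in E S a b \<Longrightarrow> conn_in E S b a"
proof -
  have "symp (adj_in E S)\<^sup>*\<^sup>*"
    by (rule symp_rtranclp) (auto intro: sympI simp: adj_in_commute)
  then show "conn_in E S a b \<Longrightarrow> conn_in E S b a"
    unfolding conn_in_def by (auto dest: sympD)
qed

lemma conn_in_trans: "conn_in E S a b \<Longrightarrow> conn_in E S b c \<Longrightarrow> conn_in E S a c"
  unfolding conn_in_def by (auto intro: rtranclp_trans)

text \<open>A walk inside \<open>S\<close> never meets a vertex outside \<open>S\<close>, so it survives deleting any edge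
  incident to such a vertex.\<close>

lemma conn_in_delete_edge_outside:
  assumes "conn_in E S x y" "c \<in> e" "c \<notin> S" "S \<subseteq> S'"
  shows "conn_in (E - {e}) S' x y"
proof -
  have "adj_in E S \<le> adj_in (E - {e}) S'"
    using assms(2-4) unfolding adj_in_def by auto
  then have "(adj_in E S)\<^sup>*\<^sup>* \<le> (adj_in (E - {e}) S')\<^sup>*\<^sup>*"
    by (rule rtranclp_mono)
  with assms(1,4) show ?thesis
    unfolding conn_in_def by blast
qed

lemma adj_in_walk_last_visit:
  assumes "(adj_in E S)\<^sup>*\<^sup>* y b" "y \<in> S" "b \<noteq> x"
  shows "conn_in E (S - {x}) y b \<or> (\<exists>c. adj_in E S x c \<and> conn_in E (S - {x}) c b)"
  using assms
proof (induction rule: converse_rtranclp_induct)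
  case base
  then show ?case unfolding conn_in_def by auto
next
  case (step y z)
  have "z \<in> S" using step(1) unfolding adj_in_def by auto
  from step.IH[OF this step.prems(2)] show ?case
  proof
    assume z_b: "conn_in E (S - {x}) z b"
    show ?thesis
    proof (cases "y = x")
      case True
      with step(1) z_b show ?thesis by blast
    next
      case False
      with step(1) z_b have "adj_in E (S - {x}) y z"
        unfolding adj_in_def conn_in_def by auto
      with z_b have "conn_in E (S - {x}) y b"
        unfolding conn_in_def adj_in_def by (auto intro: converse_rtranclp_into_rtranclp)
      then show ?thesis by blast
    qed
  qed blast
qed

lemma tree_edge_separates:
  assumes "is_tree N ET" "{a, b} \<in> ET"
    and "conn_in ET (N - {b}) q a" "conn_in ET (N - {a}) q b"
  shows False
proof -
  have "conn_in (ET - {{a, b}}) N q a" "conn_in (ET - {{a, b}}) N q b"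
    using conn_in_delete_edge_outside[OF assms(3), of b "{a, b}" N]
      conn_in_delete_edge_outside[OF assms(4), of a "{a, b}" N] by auto
  then have "conn_in (ET - {{a, b}}) N a b"
    using conn_in_trans conn_in_sym by metis
  with assms(1,2) show False
    unfolding is_tree_def by blast
qed

text \<open>The neighbour \<open>c\<close> of \<open>a\<close> on the tree path from \<open>a\<close> to \<open>b\<close> is either \<open>b\<close> itself or a
  node separating \<open>a\<close> from \<open>b\<close>.\<close>

lemma tree_adjacent_or_separated:
  assumes tree: "is_tree N ET" and "a \<in> N" "b \<in> N" "a \<noteq> b"
  obtains "{a, b} \<in> ET"
    | c where "c \<in> N" "c \<noteq> a" "c \<noteq> b" "\<not> conn_in ET (N - {c}) a b"
proof -
  have "(adj_in ET N)\<^sup>*\<^sup>* a b"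
    using tree assms(2,3) unfolding is_tree_def conn_in_def by blast
  moreover have "\<not> conn_in ET (N - {a}) a b"
    unfolding conn_in_def by simp
  ultimately obtain c where c: "adj_in ET N a c" "conn_in ET (N - {a}) c b"
    using adj_in_walk_last_visit[OF _ assms(2), where x = a] assms(4) by blast
  then have "c \<in> N" "c \<noteq> a" "{a, c} \<in> ET"
    unfolding adj_in_def by auto
  show thesis
  proof (cases "c = b")
    case True
    with \<open>{a, c} \<in> ET\<close> show thesis using that(1) by blast
  next
    case False
    have "\<not> conn_in ET (N - {c}) a b"
      using tree_edge_separates[OF tree \<open>{a, c} \<in> ET\<close>, of b] conn_in_sym[OF c(2)]
        conn_in_sym[of ET "N - {c}" a b] by blast
    with \<open>c \<in> N\<close> \<open>c \<noteq> a\<close> False show thesis by (rule that(2))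
  qed
qed

definition cross_edges ::
  "'a set set \<Rightarrow> 'b set \<Rightarrow> 'b set set \<Rightarrow> ('b \<Rightarrow> 'a set) \<Rightarrow> 'b \<Rightarrow> 'a set set" where
  "cross_edges E N ET X t = {e\<in>E. \<exists>x y s1 s2. e = {x, y} \<and>
       s1 \<in> N - {t} \<and> s2 \<in> N - {t} \<and> x \<in> X s1 \<and> y \<in> X s2 \<and>
       \<not> conn_in ET (N - {t}) s1 s2}"

lemma tcd_cross_eq_card: "tcd_cross E N ET X t = card (cross_edges E N ET X t)"
  unfolding tcd_cross_def cross_edges_def ..

lemma cross_edgesI:
  "{x, y} \<in> E \<Longrightarrow> r \<in> N - {t} \<Longrightarrow> s \<in> N - {t} \<Longrightarrow> x \<in> X r \<Longrightarrow> y \<in> X s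
   \<Longrightarrow> \<not> conn_in ET (N - {t}) r s \<Longrightarrow> {x, y} \<in> cross_edges E N ET X t"
  unfolding cross_edges_def by blast

lemma finite_cross_edges: "finite E \<Longrightarrow> finite (cross_edges E N ET X t)"
  unfolding cross_edges_def by simp

lemma tcd_finite_nodes: "tree_cut_decomp V E N ET X \<Longrightarrow> finite N"
  unfolding tree_cut_decomp_def is_tree_def simple_graph_def by blast

lemma card_bag_le_ecr_width:
  assumes "tree_cut_decomp V E N ET X" "t \<in> N"
  shows "card (X t) \<le> tcd_ecr_width E N ET X"
  using tcd_finite_nodes[OF assms(1)] assms(2)
  unfolding tcd_ecr_width_def tcd_thickness_def by (simp add: le_max_iff_disj)

lemma tcd_cross_le_ecr_width:
  assumes "tree_cut_decomp V E N ET X" "t \<in> N"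
  shows "tcd_cross E N ET X t \<le> tcd_ecr_width E N ET X"
  using tcd_finite_nodes[OF assms(1)] assms(2)
  unfolding tcd_ecr_width_def tcd_crossing_number_def by (simp add: le_max_iff_disj)

text \<open>The one-node decomposition shows that the minimum defining \<^const>\<open>ecrw\<close> is over a
  nonempty set.\<close>

lemma ecrw_attained:
  obtains N :: "nat set" and ET X
  where "tree_cut_decomp V E N ET X" "tcd_ecr_width E N ET X = ecrw V E"
proof -
  have "is_tree {0::nat} {}"
    unfolding is_tree_def simple_graph_def conn_in_def by auto
  then have "tree_cut_decomp V E {0::nat} {} (\<lambda>_. V)"
    unfolding tree_cut_decomp_def by auto
  then have "\<exists>w (N :: nat set) ET X. tree_cut_decomp V E N ET X \<and> tcd_ecr_width E N ET X = w"
    by blast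
  then have "\<exists>(N :: nat set) ET X. tree_cut_decomp V E N ET X \<and> tcd_ecr_width E N ET X = ecrw V E"
    unfolding ecrw_def by (rule LeastI_ex)
  with that show thesis by blast
qed

lemma U_in_thick_path_V: "1 \<le> i \<Longrightarrow> i \<le> n \<Longrightarrow> U i \<in> thick_path_V n"
  unfolding thick_path_V_def by auto

lemma W_in_thick_path_V:
  "1 \<le> i \<Longrightarrow> i \<le> n - 1 \<Longrightarrow> 1 \<le> j \<Longrightarrow> j \<le> n \<Longrightarrow> W i j \<in> thick_path_V n"
  unfolding thick_path_V_def by auto

lemma thick_path_E_left:
  "1 \<le> i \<Longrightarrow> i \<le> n - 1 \<Longrightarrow> 1 \<le> j \<Longrightarrow> j \<le> n \<Longrightarrow> {U i, W i j} \<in> thick_path_E n"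
  unfolding thick_path_E_def by blast

lemma thick_path_E_right:
  "1 \<le> i \<Longrightarrow> i \<le> n - 1 \<Longrightarrow> 1 \<le> j \<Longrightarrow> j \<le> n \<Longrightarrow> {U (i + 1), W i j} \<in> thick_path_E n"
  unfolding thick_path_E_def by blast

lemma finite_thick_path_V: "finite (thick_path_V n)"
proof -
  have "thick_path_V n \<subseteq> U ` {1..n} \<union> (\<lambda>(i, j). W i j) ` ({1..n} \<times> {1..n})"
    unfolding thick_path_V_def by force
  then show ?thesis by (rule finite_subset) auto
qed

lemma finite_thick_path_E: "finite (thick_path_E n)"
proof -
  have "thick_path_E n \<subseteq> Pow (thick_path_V n)"
    unfolding thick_path_E_def thick_path_V_def by force
  with finite_thick_path_V show ?thesis by (meson finite_Pow_iff finite_subset)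
qed

lemma spokes_count:
  assumes "finite Y" "finite C1" "finite C2"
    and cover: "\<And>j. 1 \<le> j \<Longrightarrow> j \<le> n \<Longrightarrow>
                  W i j \<in> Y \<or> {U i, W i j} \<in> C1 \<or> {U (i + 1), W i j} \<in> C2"
  shows "n \<le> card Y + card C1 + card C2"
proof -
  define J0 where "J0 = {j \<in> {1..n}. W i j \<in> Y}"
  define J1 where "J1 = {j \<in> {1..n}. {U i, W i j} \<in> C1}"
  define J2 where "J2 = {j \<in> {1..n}. {U (i + 1), W i j} \<in> C2}"
  have "card J0 \<le> card Y"
    by (rule card_inj_on_le[of "W i"]) (auto simp: J0_def inj_on_def assms(1))
  moreover have "card J1 \<le> card C1"
    by (rule card_inj_on_le[of "\<lambda>j. {U i, W i j}"])
       (auto simp: J1_def inj_on_def doubleton_eq_iff assms(2))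
  moreover have "card J2 \<le> card C2"
    by (rule card_inj_on_le[of "\<lambda>j. {U (i + 1), W i j}"])
       (auto simp: J2_def inj_on_def doubleton_eq_iff assms(3))
  moreover have "n \<le> card J0 + card J1 + card J2"
  proof -
    have "card {1..n} \<le> card (J0 \<union> J1 \<union> J2)"
      using cover by (intro card_mono) (fastforce simp: J0_def J1_def J2_def)+
    also have "\<dots> \<le> card J0 + card J1 + card J2"
      by (meson add_right_mono card_Un_le le_trans)
    finally show ?thesis by simp
  qed
  ultimately show ?thesis by linarith
qed

lemma discrete_boundary_step:
  fixes m :: nat
  assumes "P 1" "\<not> P m" "1 \<le> m"
  shows "\<exists>i. 1 \<le> i \<and> i < m \<and> P i \<and> \<not> P (i + 1)"
  using assms(2,3)
proof (induction m)
  case (Suc m)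
  have "1 \<le> m" using Suc.prems(1) assms(1) by (cases m) auto
  show ?case
  proof (cases "P m")
    case True
    with \<open>1 \<le> m\<close> Suc.prems(1) show ?thesis by auto
  next
    case False
    with Suc.IH \<open>1 \<le> m\<close> show ?thesis using less_SucI by blast
  qed
qed simp

context
  fixes n :: nat and N :: "'b set" and ET X
  assumes tcd: "tree_cut_decomp (thick_path_V n) (thick_path_E n) N ET X"
begin

lemma decomp_is_tree: "is_tree N ET"
  and decomp_bags_cover: "(\<Union>t\<in>N. X t) = thick_path_V n"
  using tcd unfolding tree_cut_decomp_def by simp_all

lemma decomp_bag_exists: "v \<in> thick_path_V n \<Longrightarrow> \<exists>q\<in>N. v \<in> X q"
  using decomp_bags_cover by blast

lemma decomp_finite_bag: "t \<in> N \<Longrightarrow> finite (X t)"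
  using decomp_bags_cover finite_thick_path_V by (metis UN_upper finite_subset)

abbreviation cross :: "'b \<Rightarrow> tp_vertex set set" where
  "cross \<equiv> cross_edges (thick_path_E n) N ET X"

lemma separated_spokes_bound:
  assumes i: "1 \<le> i" "i \<le> n - 1" and t: "t \<in> N"
    and a: "a \<in> N - {t}" "U i \<in> X a" and b: "b \<in> N - {t}" "U (i + 1) \<in> X b"
    and sep: "\<not> conn_in ET (N - {t}) a b"
  shows "n \<le> card (X t) + 2 * card (cross t)"
proof -
  have "W i j \<in> X t \<or> {U i, W i j} \<in> cross t \<or> {U (i + 1), W i j} \<in> cross t"
    if j: "1 \<le> j" "j \<le> n" for j
  proof -
    obtain q where q: "q \<in> N" "W i j \<in> X q"
      using decomp_bag_exists W_in_thick_path_V[OF i j] by blast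
    show ?thesis
    proof (cases "q = t")
      case False
      consider "\<not> conn_in ET (N - {t}) a q" | "\<not> conn_in ET (N - {t}) b q"
        using sep conn_in_trans[of ET "N - {t}" a q b] conn_in_sym[of ET "N - {t}" b q] by blast
      then show ?thesis
      proof cases
        case 1
        have "{U i, W i j} \<in> cross t"
          using thick_path_E_left[OF i j] a q False 1
          by (intro cross_edgesI[where r = a and s = q]) auto
        then show ?thesis by blast
      next
        case 2
        have "{U (i + 1), W i j} \<in> cross t"
          using thick_path_E_right[OF i j] b q False 2
          by (intro cross_edgesI[where r = b and s = q]) auto
        then show ?thesis by blast
      qed
    qed (use q in blast)
  qed
  then have "n \<le> card (X t) + card (cross t) + card (cross t)"
    by (intro spokes_count decomp_finite_bag t finite_cross_edges finite_thick_path_E)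
  then show ?thesis by simp
qed

lemma adjacent_spokes_bound:
  assumes i: "1 \<le> i" "i \<le> n - 1" and edge: "{a, b} \<in> ET" "a \<noteq> b"
    and a: "a \<in> N" "U i \<in> X a" and b: "b \<in> N" "U (i + 1) \<in> X b"
  shows "n \<le> card (X a) + card (X b) + card (cross a) + card (cross b)"
proof -
  have "W i j \<in> X a \<union> X b \<or> {U i, W i j} \<in> cross b \<or> {U (i + 1), W i j} \<in> cross a"
    if j: "1 \<le> j" "j \<le> n" for j
  proof -
    obtain q where q: "q \<in> N" "W i j \<in> X q"
      using decomp_bag_exists W_in_thick_path_V[OF i j] by blast
    show ?thesis
    proof (cases "q = a \<or> q = b")
      case False
      consider "\<not> conn_in ET (N - {b}) q a" | "\<not> conn_in ET (N - {a}) q b"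
        using tree_edge_separates[OF decomp_is_tree edge(1)] by blast
      then show ?thesis
      proof cases
        case 1
        have "{U i, W i j} \<in> cross b"
          using thick_path_E_left[OF i j] a q False edge(2) 1 conn_in_sym[of ET "N - {b}" a q]
          by (intro cross_edgesI[where r = a and s = q]) auto
        then show ?thesis by blast
      next
        case 2
        have "{U (i + 1), W i j} \<in> cross a"
          using thick_path_E_right[OF i j] b q False edge(2) 2 conn_in_sym[of ET "N - {a}" b q]
          by (intro cross_edgesI[where r = b and s = q]) auto
        then show ?thesis by blast
      qed
    qed (use q in blast)
  qed
  then have "n \<le> card (X a \<union> X b) + card (cross b) + card (cross a)"
    by (intro spokes_count finite_cross_edges finite_thick_path_E) (simp add: a b decomp_finite_bag)
  then show ?thesis
    using card_Un_le[of "X a" "X b"] by linarith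
qed

lemma thick_path_ecr_width_bound: "n \<le> 4 * tcd_ecr_width (thick_path_E n) N ET X"
proof (cases "n = 0")
  case n_pos: False
  define w where "w = tcd_ecr_width (thick_path_E n) N ET X"
  have bag_le: "card (X t) \<le> w" and cross_le: "card (cross t) \<le> w" if "t \<in> N" for t
    using card_bag_le_ecr_width[OF tcd that] tcd_cross_le_ecr_width[OF tcd that]
    by (simp_all add: w_def tcd_cross_eq_card)
  obtain a where a: "a \<in> N" "U 1 \<in> X a"
    using decomp_bag_exists U_in_thick_path_V[of 1 n] n_pos by auto
  have "n \<le> 4 * w"
  proof (cases "\<forall>i\<in>{1..n}. U i \<in> X a")
    case True
    then have "card {1..n} \<le> card (X a)"
      by (intro card_inj_on_le[of U] decomp_finite_bag a(1)) (auto simp: inj_on_def)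
    with bag_le[OF a(1)] show ?thesis by simp
  next
    case False
    then obtain m where "1 \<le> m" "m \<le> n" "U m \<notin> X a" by auto
    with discrete_boundary_step[of "\<lambda>i. U i \<in> X a" m] a(2)
    obtain i where i: "1 \<le> i" "i \<le> n - 1" "U i \<in> X a" "U (i + 1) \<notin> X a"
      by auto
    have "U (i + 1) \<in> thick_path_V n"
      using i(1,2) by (intro U_in_thick_path_V) auto
    then obtain b where b: "b \<in> N" "U (i + 1) \<in> X b"
      using decomp_bag_exists by blast
    have "a \<noteq> b" using i(4) b(2) by blast
    from tree_adjacent_or_separated[OF decomp_is_tree a(1) b(1) this] show ?thesis
    proof cases
      case 1
      from adjacent_spokes_bound[OF i(1,2) 1 \<open>a \<noteq> b\<close> a(1) i(3) b]
      show ?thesis using bag_le[OF a(1)] bag_le[OF b(1)] cross_le[OF a(1)] cross_le[OF b(1)]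
        by linarith
    next
      case (2 c)
      then have "n \<le> card (X c) + 2 * card (cross c)"
        using a(1) b(1) by (intro separated_spokes_bound[OF i(1,2) _ _ i(3) _ b(2)]) auto
      then show ?thesis using bag_le[OF \<open>c \<in> N\<close>] cross_le[OF \<open>c \<in> N\<close>] by linarith
    qed
  qed
  then show ?thesis by (simp add: w_def)
qed simp

end

theorem lemma3p14:
  fixes k :: nat
  assumes "k \<ge> 1"
  shows "ecrw (thick_path_V (4 * k)) (thick_path_E (4 * k)) \<ge> k"
proof -
  obtain N :: "nat set" and ET X
    where tcd: "tree_cut_decomp (thick_path_V (4 * k)) (thick_path_E (4 * k)) N ET X"
      and "tcd_ecr_width (thick_path_E (4 * k)) N ET X = ecrw (thick_path_V (4 * k)) (thick_path_E (4 * k))"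
    by (rule ecrw_attained)
  with thick_path_ecr_width_bound[OF tcd] show ?thesis by simp
qed

end
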